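(* For $d>0$ let $\beta_d:\mathbb{R}\setminus 2\pi\mathbb{Z}\to\mathbb{R}$ be the function \[ \beta_{d}(s) = -\frac{s}{d} + \frac{\pi}{d}\coth\Big(\frac{\pi s}{2d}\Big) + \frac{\pi}{d} \sum_{n=1}^{\infty} \frac{2\sinh(\frac{\pi s}{d})}{\cosh(\frac{\pi s}{d})-\cosh(\frac{2\pi^2 n}{d})}. \] Equivalently, writing $x=\pi^2/(2d)$, \[ \pi\beta_d(\pi/2) = 2x\coth(x/2) - x - 4x\sinh(x)\sum_{n=1}^\infty \frac{1}{\cosh(4nx)-\cosh(x)}. \] Then \[ \beta_d(\pi/2)\ \ge\ 1 \qquad\text{for all } d\in(0,\infty). \]
   Context: The function $\beta_d$ is the kernel of the periodic Hilbert transform $\mathcal{C}_d$ on the strip $\{(x,y)\in\mathbb{R}^2: -d<y<0\}$: for a smooth $2\pi$-periodic mean-zero $F:\mathbb{R}\to\mathbb{R}$, $(\mathcal{C}_d F)(x)=\frac{1}{2\pi}\,\mathrm{PV}\int_{-\pi}^{\pi}\beta_d(x-s)F(s)\,ds$, where $\mathcal{C}_d$ maps $\sum_{n\ge1}(a_n\cos nx+b_n\sin nx)$ to $\sum_{n\ge1}(a_n\coth(nd)\sin nx - b_n\coth(nd)\cos nx)$. This interpretation is background only; the claim concerns the explicit formula for $\beta_d$. *)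

theory Defs
  imports "HOL-Analysis.Analysis"
begin

definition coth :: "real \<Rightarrow> real" where
  "coth t = cosh t / sinh t"

text \<open>The kernel beta_d(s) of the periodic Hilbert transform on the strip of depth d,
  for d > 0 and s not in 2 pi Z.\<close>
definition beta :: "real \<Rightarrow> real \<Rightarrow> real" where
  "beta d s = - s / d + (pi / d) * coth (pi * s / (2 * d))
     + (pi / d) * (\<Sum>n. 2 * sinh (pi * s / d) /
          (cosh (pi * s / d) - cosh (2 * pi^2 * real (Suc n) / d)))"

end

(*
  Let C_T(u) = \<Sum>_{k \<in> \<int>} cot (u + i k T), summed symmetrically in k.  It is \<pi>-periodic,
  has simple poles of residue 1 exactly at the lattice \<pi>\<int> + i T \<int>, and satisfies
  C_T(u + i T) = C_T(u) - 2 i.  Rotating by u \<mapsto> i \<pi> u / T exchanges the two periods, so the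
  "dual" function  -2u/T + (i \<pi>/T) C_{\<pi>^2/T}(i \<pi> u / T)  has the same poles, residues and
  quasi-periods.  Their difference is therefore doubly periodic with only removable singularities,
  hence constant by Liouville's theorem, and it vanishes because it is odd.

  Since cot (i x) = -i coth x and coth (a + b) + coth (a - b) = 2 sinh 2a / (cosh 2a - cosh 2b),
  the dual function at u = s/2 is exactly \<beta>_d(s) for T = d.  Hence
  \<beta>_d(\<pi>/2) = C_d(\<pi>/4) = 1 + \<Sum>_{n \<ge> 1} (cot (\<pi>/4 + i n d) + cot (\<pi>/4 - i n d)),
  and every pair in the sum equals 1 / |sin (\<pi>/4 + i n d)|^2 \<ge> 0.
*)
theory Submission
  imports Defs "HOL-Complex_Analysis.Complex_Analysis" "HOL-Real_Asymp.Real_Asymp"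
begin

section \<open>Rectangular lattices\<close>

definition rect_lattice :: "real \<Rightarrow> real \<Rightarrow> complex set" where
  "rect_lattice a b = {Complex (of_int m * a) (of_int k * b) | m k. True}"

lemma mem_rect_lattice_iff:
  assumes "a \<noteq> 0" "b \<noteq> 0"
  shows "z \<in> rect_lattice a b \<longleftrightarrow> Re z / a \<in> \<int> \<and> Im z / b \<in> \<int>"
proof
  assume "z \<in> rect_lattice a b"
  then show "Re z / a \<in> \<int> \<and> Im z / b \<in> \<int>"
    using assms by (auto simp: rect_lattice_def)
next
  assume "Re z / a \<in> \<int> \<and> Im z / b \<in> \<int>"
  then obtain m k where "Re z / a = of_int m" "Im z / b = of_int k"
    by (auto elim!: Ints_cases)
  then have "z = Complex (of_int m * a) (of_int k * b)"
    using assms by (simp add: complex_eq_iff field_simps)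
  then show "z \<in> rect_lattice a b"
    unfolding rect_lattice_def by blast
qed

lemma rect_lattice_add_iff:
  assumes "a \<noteq> 0" "b \<noteq> 0" "w \<in> rect_lattice a b"
  shows "z + w \<in> rect_lattice a b \<longleftrightarrow> z \<in> rect_lattice a b"
proof -
  have *: "(y + x) / c \<in> \<int> \<longleftrightarrow> y / c \<in> \<int>" if "x / c \<in> \<int>" for x y c :: real
    using that Ints_add[of "y / c" "x / c"] Ints_diff[of "y / c + x / c" "x / c"]
    by (auto simp: add_divide_distrib)
  show ?thesis
    using assms by (simp add: mem_rect_lattice_iff *)
qed

lemma rect_lattice_uminus_iff:
  assumes "a \<noteq> 0" "b \<noteq> 0"
  shows "- z \<in> rect_lattice a b \<longleftrightarrow> z \<in> rect_lattice a b"
  using assms by (simp add: mem_rect_lattice_iff)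

lemma rect_lattice_diff:
  assumes "a \<noteq> 0" "b \<noteq> 0" "z \<in> rect_lattice a b" "w \<in> rect_lattice a b"
  shows "z - w \<in> rect_lattice a b"
  using rect_lattice_add_iff[of a b "- w" z] assms by (simp add: rect_lattice_uminus_iff)

lemma zero_in_rect_lattice: "0 \<in> rect_lattice a b"
  unfolding rect_lattice_def by (auto intro!: exI[of _ 0] simp: complex_eq_iff)

lemma rect_lattice_generators:
  "complex_of_real a \<in> rect_lattice a b" "\<i> * complex_of_real b \<in> rect_lattice a b"
  unfolding rect_lattice_def by (auto intro!: exI[of _ 0] exI[of _ 1] simp: complex_eq_iff)

lemma of_int_mult_in_rect_lattice:
  assumes "a \<noteq> 0" "b \<noteq> 0" "w \<in> rect_lattice a b"
  shows "of_int j * w \<in> rect_lattice a b"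
  using assms Ints_mult[OF Ints_of_int[of j]] by (simp add: mem_rect_lattice_iff flip: times_divide_eq_right)

lemma rect_lattice_dist_ge:
  assumes "a > 0" "b > 0" "z \<in> rect_lattice a b" "w \<in> rect_lattice a b" "z \<noteq> w"
  shows "min a b \<le> dist z w"
proof -
  have "z - w \<in> rect_lattice a b"
    using assms by (intro rect_lattice_diff) auto
  then obtain m k where mk: "z - w = Complex (of_int m * a) (of_int k * b)"
    unfolding rect_lattice_def by blast
  have "m \<noteq> 0 \<or> k \<noteq> 0"
    using mk assms(5) by (metis Complex_eq_0 eq_iff_diff_eq_0 mult_eq_0_iff of_int_0)
  then have "1 \<le> \<bar>m\<bar> \<or> 1 \<le> \<bar>k\<bar>"
    by linarith
  then have "1 \<le> \<bar>real_of_int m\<bar> \<or> 1 \<le> \<bar>real_of_int k\<bar>"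
    by (metis of_int_1_le_iff of_int_abs)
  then have "min a b \<le> \<bar>of_int m\<bar> * a \<or> min a b \<le> \<bar>of_int k\<bar> * b"
    using assms(1,2) by (smt (verit) mult_le_cancel_right1)
  moreover have "\<bar>Re (z - w)\<bar> = \<bar>of_int m\<bar> * a" "\<bar>Im (z - w)\<bar> = \<bar>of_int k\<bar> * b"
    using assms(1,2) by (simp_all add: mk abs_mult)
  ultimately show ?thesis
    unfolding dist_norm using abs_Re_le_cmod[of "z - w"] abs_Im_le_cmod[of "z - w"]
    by (metis order_trans)
qed

lemma closed_rect_lattice:
  assumes "a > 0" "b > 0"
  shows "closed (rect_lattice a b)"
proof (rule discrete_imp_closed[of "min a b"])
  show "\<forall>x \<in> rect_lattice a b. \<forall>y \<in> rect_lattice a b. dist y x < min a b \<longrightarrow> y = x"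
    using rect_lattice_dist_ge[OF assms] by (meson not_less)
qed (use assms in simp)

lemma open_compl_rect_lattice:
  "a > 0 \<Longrightarrow> b > 0 \<Longrightarrow> open (- rect_lattice a b)"
  using closed_rect_lattice by (simp add: open_Compl)

lemma eventually_not_in_rect_lattice:
  assumes "a > 0" "b > 0"
  shows "eventually (\<lambda>y. y \<notin> rect_lattice a b) (at z)"
proof (cases "z \<in> rect_lattice a b")
  case True
  have "eventually (\<lambda>y. y \<in> ball z (min a b) - {z}) (at z)"
    using assms by (intro eventually_at_in_open) auto
  then show ?thesis
  proof eventually_elim
    case (elim y)
    then show ?case
      using rect_lattice_dist_ge[OF assms _ True, of y] by (auto simp: dist_commute)
  qed
next
  case False
  then show ?thesis
    using eventually_at_in_open'[OF open_compl_rect_lattice[OF assms], of z] by simp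
qed

lemma rect_lattice_reduce:
  assumes "a > 0" "b > 0"
  obtains w where "w \<in> rect_lattice a b" "norm (z - w) \<le> a + b"
proof
  define w where "w = Complex (of_int (round (Re z / a)) * a) (of_int (round (Im z / b)) * b)"
  show "w \<in> rect_lattice a b"
    unfolding w_def rect_lattice_def by blast
  have "Re z - Re w = a * (Re z / a - of_int (round (Re z / a)))"
    "Im z - Im w = b * (Im z / b - of_int (round (Im z / b)))"
    using assms by (simp_all add: w_def field_simps)
  then have "\<bar>Re z - Re w\<bar> \<le> a" "\<bar>Im z - Im w\<bar> \<le> b"
    using of_int_round_abs_le[of "Re z / a"] of_int_round_abs_le[of "Im z / b"] assms
    by (simp_all add: abs_mult abs_minus_commute)
  then show "norm (z - w) \<le> a + b"
    using cmod_le[of "z - w"] by simp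
qed

section \<open>Doubly periodic functions\<close>

lemma periodic_of_int_mult:
  assumes S: "\<And>z m. z + of_int m * p \<in> S \<longleftrightarrow> z \<in> S"
    and f: "\<And>z. z \<notin> S \<Longrightarrow> f (z + p) = f z"
    and z: "z \<notin> S"
  shows "f (z + of_int m * p) = f z"
proof (induction m rule: int_induct[where k = 0])
  case base
  then show ?case by simp
next
  case (step1 i)
  have "f (z + of_int (i + 1) * p) = f ((z + of_int i * p) + p)"
    by (simp add: algebra_simps)
  also have "\<dots> = f (z + of_int i * p)"
    using S[of z i] z by (intro f) simp
  finally show ?case
    using step1.IH by simp
next
  case (step2 i)
  have "f (z + of_int i * p) = f ((z + of_int (i - 1) * p) + p)"
    by (simp add: algebra_simps)
  also have "\<dots> = f (z + of_int (i - 1) * p)"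
    using S[of z "i - 1"] z by (intro f) simp
  finally show ?case
    using step2.IH by simp
qed

lemma rect_lattice_periodicI:
  assumes "a \<noteq> 0" "b \<noteq> 0"
    and per_a: "\<And>z. z \<notin> rect_lattice a b \<Longrightarrow> f (z + complex_of_real a) = f z"
    and per_b: "\<And>z. z \<notin> rect_lattice a b \<Longrightarrow> f (z + \<i> * complex_of_real b) = f z"
    and "z \<notin> rect_lattice a b" "w \<in> rect_lattice a b"
  shows "f (z + w) = f z"
proof -
  have invariant: "y + of_int j * p \<in> rect_lattice a b \<longleftrightarrow> y \<in> rect_lattice a b"
    if "p \<in> rect_lattice a b" for y j p
    using assms(1,2) that by (intro rect_lattice_add_iff of_int_mult_in_rect_lattice)
  obtain m k where "w = Complex (of_int m * a) (of_int k * b)"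
    using assms(6) unfolding rect_lattice_def by blast
  then have w: "w = of_int m * complex_of_real a + of_int k * (\<i> * complex_of_real b)"
    by (simp add: complex_eq_iff)
  have "f (z + w) = f ((z + of_int m * complex_of_real a) + of_int k * (\<i> * complex_of_real b))"
    by (simp add: w add.assoc)
  also have "\<dots> = f (z + of_int m * complex_of_real a)"
    using assms(5) rect_lattice_generators
    by (intro periodic_of_int_mult[OF invariant] per_b) (auto simp: invariant)
  also have "\<dots> = f z"
    using assms(5) rect_lattice_generators by (intro periodic_of_int_mult[OF invariant] per_a) auto
  finally show ?thesis .
qed

lemma entire_rect_lattice_periodic_imp_constant:
  assumes "a > 0" "b > 0" "f holomorphic_on UNIV"
    and periodic: "\<And>z w. w \<in> rect_lattice a b \<Longrightarrow> f (z + w) = f z"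
  shows "f constant_on UNIV"
proof (rule Liouville_theorem[OF assms(3)])
  have "range f \<subseteq> f ` cball 0 (a + b)"
  proof
    fix y assume "y \<in> range f"
    then obtain z where y: "y = f z" by blast
    obtain w where w: "w \<in> rect_lattice a b" "norm (z - w) \<le> a + b"
      using rect_lattice_reduce[OF assms(1,2)] by blast
    have "f (z - w) = f z"
      using periodic[OF w(1), of "z - w"] by simp
    moreover have "z - w \<in> cball 0 (a + b)"
      using w(2) by (simp add: dist_norm norm_minus_commute)
    ultimately show "y \<in> f ` cball 0 (a + b)"
      unfolding y by (metis rev_image_eqI)
  qed
  moreover have "compact (f ` cball 0 (a + b))"
    by (intro compact_continuous_image compact_cball holomorphic_on_imp_continuous_on
        holomorphic_on_subset[OF assms(3)]) simp
  ultimately show "bounded (range f)"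
    using compact_imp_bounded bounded_subset by blast
qed

lemma remove_sings_rect_lattice_periodic:
  assumes "a > 0" "b > 0"
    and periodic: "\<And>z w. z \<notin> rect_lattice a b \<Longrightarrow> w \<in> rect_lattice a b \<Longrightarrow> f (z + w) = f z"
    and "w \<in> rect_lattice a b"
  shows "remove_sings f (z + w) = remove_sings f z"
proof -
  have "eventually (\<lambda>v. z + v \<notin> rect_lattice a b) (at 0)"
    using eventually_not_in_rect_lattice[OF assms(1,2), of z]
    by (simp add: eventually_at_to_0[of _ z] add.commute)
  then have "eventually (\<lambda>v. f (z + w + v) = f (z + v)) (at 0)"
  proof eventually_elim
    case (elim v)
    show ?case
      using periodic[OF elim assms(4)] by (simp add: add_ac)
  qed
  then show ?thesis
    by (subst (1 2) remove_sings_shift_0) (rule remove_sings_cong, auto)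
qed

lemma remove_sings_analytic_at_if_mult_tendsto_0:
  assumes "r > 0" "f holomorphic_on ball z r - {z}" "((\<lambda>w. (w - z) * f w) \<longlongrightarrow> 0) (at z)"
  shows "remove_sings f analytic_on {z}"
proof -
  have isolated: "isolated_singularity_at f z"
    using assms(1,2) by (intro isolated_singularity_at_holomorphic[of _ "ball z r"]) auto
  obtain g where g: "g holomorphic_on ball z r" "\<And>w. w \<in> ball z r - {z} \<Longrightarrow> g w = f w"
    using holomorphic_on_extend_lim[OF assms(2)] assms(1,3) by auto
  have "continuous_on (ball z r) g"
    using g(1) by (rule holomorphic_on_imp_continuous_on)
  then have "g \<midarrow>z\<rightarrow> g z"
    using assms(1) by (simp add: continuous_on_eq_continuous_at isCont_def)
  moreover have "eventually (\<lambda>w. w \<in> ball z r - {z}) (at z)"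
    using assms(1) by (intro eventually_at_in_open) auto
  then have "eventually (\<lambda>w. g w = f w) (at z)"
    by eventually_elim (rule g(2))
  ultimately have "f \<midarrow>z\<rightarrow> g z"
    by (rule Lim_transform_eventually)
  with isolated show ?thesis
    by (rule remove_sings_analytic_at)
qed

lemma punctured_ball_subset_compl_rect_lattice:
  assumes "a > 0" "b > 0" "w \<in> rect_lattice a b"
  shows "ball w (min a b) - {w} \<subseteq> - rect_lattice a b"
proof
  fix z assume z: "z \<in> ball w (min a b) - {w}"
  show "z \<in> - rect_lattice a b"
  proof
    assume "z \<in> rect_lattice a b"
    then have "min a b \<le> dist w z"
      using z rect_lattice_dist_ge[OF assms] by auto
    with z show False
      by (auto simp: min_le_iff_disj)
  qed
qed

lemma remove_sings_rect_lattice_periodic_entire: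
  assumes "a > 0" "b > 0"
    and hol: "f holomorphic_on - rect_lattice a b"
    and periodic: "\<And>z w. z \<notin> rect_lattice a b \<Longrightarrow> w \<in> rect_lattice a b \<Longrightarrow> f (z + w) = f z"
    and lim: "((\<lambda>z. z * f z) \<longlongrightarrow> 0) (at 0)"
  shows "remove_sings f analytic_on UNIV"
proof -
  have E0: "remove_sings f analytic_on {0}"
    using assms(1,2) lim punctured_ball_subset_compl_rect_lattice[OF assms(1,2) zero_in_rect_lattice]
    by (intro remove_sings_analytic_at_if_mult_tendsto_0[of "min a b"])
       (auto intro: holomorphic_on_subset[OF hol])
  have "remove_sings f analytic_on rect_lattice a b"
    unfolding analytic_on_analytic_at[of _ "rect_lattice a b"]
  proof
    fix w assume w: "w \<in> rect_lattice a b"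
    have "(remove_sings f \<circ> (\<lambda>z. z - w)) analytic_on {w}"
      using E0 by (intro analytic_on_compose) (auto intro!: analytic_intros)
    moreover have "remove_sings f \<circ> (\<lambda>z. z - w) = remove_sings f"
    proof
      fix z
      have "remove_sings f ((z - w) + w) = remove_sings f (z - w)"
        using assms(1,2) periodic w by (rule remove_sings_rect_lattice_periodic)
      then show "(remove_sings f \<circ> (\<lambda>z. z - w)) z = remove_sings f z"
        by simp
    qed
    ultimately show "remove_sings f analytic_on {w}"
      by simp
  qed
  moreover have "remove_sings f analytic_on - rect_lattice a b"
    using hol open_compl_rect_lattice[OF assms(1,2)]
    by (intro remove_sings_analytic_on) (simp add: analytic_on_open)
  ultimately have "remove_sings f analytic_on (rect_lattice a b \<union> - rect_lattice a b)"
    by (rule analytic_on_Un[THEN iffD2, OF conjI])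
  then show ?thesis
    by simp
qed

lemma rect_lattice_periodic_imp_constant:
  assumes "a > 0" "b > 0"
    and hol: "f holomorphic_on - rect_lattice a b"
    and periodic: "\<And>z w. z \<notin> rect_lattice a b \<Longrightarrow> w \<in> rect_lattice a b \<Longrightarrow> f (z + w) = f z"
    and lim: "((\<lambda>z. z * f z) \<longlongrightarrow> 0) (at 0)"
  obtains c where "\<And>z. z \<notin> rect_lattice a b \<Longrightarrow> f z = c"
proof -
  have "remove_sings f (z + w) = remove_sings f z" if "w \<in> rect_lattice a b" for z w
    using assms(1,2) periodic that by (rule remove_sings_rect_lattice_periodic)
  moreover have "remove_sings f holomorphic_on UNIV"
    using remove_sings_rect_lattice_periodic_entire[OF assms] by (rule analytic_imp_holomorphic)
  ultimately have "remove_sings f constant_on UNIV"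
    using assms(1,2) by (intro entire_rect_lattice_periodic_imp_constant)
  then obtain c where c: "\<And>z. remove_sings f z = c"
    unfolding constant_on_def by blast
  have "f z = c" if "z \<notin> rect_lattice a b" for z
  proof -
    have "f analytic_on - rect_lattice a b"
      using hol open_compl_rect_lattice[OF assms(1,2)] by (simp add: analytic_on_open)
    then have "f analytic_on {z}"
      by (rule analytic_on_subset) (use that in auto)
    then show ?thesis
      using c[of z] by simp
  qed
  then show ?thesis
    using that by blast
qed

section \<open>The cotangent lattice sum\<close>

lemma sin_nonzero_if_Im_nonzero:
  fixes z :: complex
  assumes "Im z \<noteq> 0"
  shows "sin z \<noteq> 0"
  using assms by (auto simp: sin_eq_0)

lemma sin_add_imaginary_nonzero:
  assumes "u \<notin> rect_lattice pi T"
  shows "sin (u + \<i> * of_real (of_int k * T)) \<noteq> 0"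
proof
  assume "sin (u + \<i> * of_real (of_int k * T)) = 0"
  then obtain m :: int where "u + \<i> * of_real (of_int k * T) = of_real (of_int m * pi)"
    by (auto simp: sin_eq_0)
  then have "u = Complex (of_int m * pi) (of_int (- k) * T)"
    by (auto simp: complex_eq_iff)
  with assms show False
    unfolding rect_lattice_def by blast
qed

lemma cot_conv_exp:
  fixes w :: complex
  assumes "sin w \<noteq> 0"
  shows "cot w = \<i> - 2 * \<i> / (1 - exp (2 * \<i> * w))"
proof -
  define e where "e = exp (\<i> * w)"
  have "e \<noteq> 0"
    by (simp add: e_def)
  have exp2: "exp (2 * \<i> * w) = e * e"
    unfolding e_def by (simp add: mult.assoc flip: exp_add)
  have sin: "sin w = (e * e - 1) / (2 * \<i> * e)" and cos: "cos w = (e * e + 1) / (2 * e)"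
    using \<open>e \<noteq> 0\<close> by (simp_all add: sin_exp_eq cos_exp_eq exp_minus e_def field_simps)
  have "1 - e * e \<noteq> 0"
    using assms by (auto simp: sin)
  then show ?thesis
    using \<open>e \<noteq> 0\<close> unfolding cot_def sin cos exp2 by (simp add: field_simps)
qed

lemma cot_conv_exp':
  fixes w :: complex
  assumes "sin w \<noteq> 0"
  shows "cot w = 2 * \<i> / (1 - exp (- 2 * \<i> * w)) - \<i>"
proof -
  have "- cot w = \<i> - 2 * \<i> / (1 - exp (- 2 * \<i> * w))"
    using cot_conv_exp[of "- w"] assms by simp
  then show ?thesis
    by (metis minus_diff_eq minus_minus)
qed

lemma norm_inverse_one_minus_diff_le:
  fixes p q :: "'a :: real_normed_field"
  assumes "norm p \<le> B" "norm q \<le> B" "B \<le> 1/2"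
  shows "norm (1 / (1 - p) - 1 / (1 - q)) \<le> 8 * B"
proof -
  have "0 \<le> B"
    using assms(1) norm_ge_zero order_trans by blast
  have p: "1/2 \<le> norm (1 - p)" and q: "1/2 \<le> norm (1 - q)"
    using norm_triangle_ineq2[of 1 p] norm_triangle_ineq2[of 1 q] assms by auto
  then have "1 - p \<noteq> 0" "1 - q \<noteq> 0"
    by auto
  then have "1 / (1 - p) - 1 / (1 - q) = (p - q) / ((1 - p) * (1 - q))"
    by (simp add: field_simps)
  also have "norm \<dots> = norm (p - q) / (norm (1 - p) * norm (1 - q))"
    by (simp add: norm_divide norm_mult)
  also have "\<dots> \<le> (2 * B) / ((1/2) * (1/2))"
    using norm_triangle_ineq4[of p q] assms p q \<open>0 \<le> B\<close>
    by (intro frac_le mult_mono) auto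
  finally show ?thesis
    by simp
qed

lemma norm_cot_add_cot_shift_le:
  fixes u :: complex and Y :: real
  assumes small: "exp (2 * norm u - 2 * Y) \<le> 1/2"
  shows "norm (cot (u + \<i> * of_real Y) + cot (u - \<i> * of_real Y)) \<le> 16 * exp (2 * norm u - 2 * Y)"
proof -
  define B where "B = exp (2 * norm u - 2 * Y)"
  define p where "p = exp (- 2 * \<i> * (u - \<i> * of_real Y))"
  define q where "q = exp (2 * \<i> * (u + \<i> * of_real Y))"
  have "exp (2 * norm u - 2 * Y) < 1"
    using small by linarith
  then have "\<bar>Im u\<bar> < Y"
    using abs_Im_le_cmod[of u] by simp
  then have "sin (u + \<i> * of_real Y) \<noteq> 0" "sin (u - \<i> * of_real Y) \<noteq> 0"
    by (auto intro!: sin_nonzero_if_Im_nonzero)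
  then have "cot (u + \<i> * of_real Y) + cot (u - \<i> * of_real Y) = 2 * \<i> * (1 / (1 - p) - 1 / (1 - q))"
    unfolding p_def q_def cot_conv_exp[OF \<open>sin (u + _) \<noteq> 0\<close>] cot_conv_exp'[OF \<open>sin (u - _) \<noteq> 0\<close>]
    by (simp add: algebra_simps)
  also have "norm \<dots> \<le> 2 * (8 * B)"
    unfolding norm_mult
  proof (intro mult_mono norm_inverse_one_minus_diff_le)
    show "norm p \<le> B" "norm q \<le> B"
      using abs_Im_le_cmod[of u] by (simp_all add: p_def q_def B_def)
  qed (use small B_def in auto)
  finally show ?thesis
    by (simp add: B_def)
qed

text \<open>
  \<open>cot_sum T u\<close> is the sum of \<open>cot (u + \<i> k T)\<close> over \<open>k \<in> \<int>\<close>, with the terms for \<open>k\<close> and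
  \<open>-k\<close> grouped into \<open>cot_pair T u (k - 1)\<close> so that the series converges.
\<close>

definition cot_pair :: "real \<Rightarrow> complex \<Rightarrow> nat \<Rightarrow> complex" where
  "cot_pair T u n = cot (u + \<i> * of_real (real (Suc n) * T)) + cot (u - \<i> * of_real (real (Suc n) * T))"

definition cot_sum :: "real \<Rightarrow> complex \<Rightarrow> complex" where
  "cot_sum T u = cot u + (\<Sum>n. cot_pair T u n)"

lemma exp_linear_geometric:
  "exp (c - real n * T) = exp c * exp (- T) ^ n"
  by (simp add: exp_diff exp_minus exp_of_nat_mult[symmetric] field_simps)

lemma cot_pair_eventually_le:
  assumes "T > 0"
  shows "eventually (\<lambda>n. \<forall>u. norm u \<le> R \<longrightarrow>
           norm (cot_pair T u n) \<le> 16 * exp (2 * R - 2 * T - real n * (2 * T))) sequentially"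
proof -
  have "(\<lambda>n. exp (2 * R - 2 * T) * exp (- (2 * T)) ^ n) \<longlonglongrightarrow> 0"
    using assms by (intro tendsto_mult_right_zero LIMSEQ_power_zero) auto
  then have "eventually (\<lambda>n. exp (2 * R - 2 * T - real n * (2 * T)) < 1/2) sequentially"
    unfolding exp_linear_geometric by (rule order_tendstoD(2)) simp
  then show ?thesis
  proof eventually_elim
    case (elim n)
    show ?case
    proof (intro allI impI)
      fix u :: complex assume "norm u \<le> R"
      then have le: "exp (2 * norm u - 2 * (real (Suc n) * T)) \<le> exp (2 * R - 2 * T - real n * (2 * T))"
        by (simp add: algebra_simps)
      have "norm (cot_pair T u n) \<le> 16 * exp (2 * norm u - 2 * (real (Suc n) * T))"
        unfolding cot_pair_def by (rule norm_cot_add_cot_shift_le) (use le elim in linarith)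
      also have "\<dots> \<le> 16 * exp (2 * R - 2 * T - real n * (2 * T))"
        using le by simp
      finally show "norm (cot_pair T u n) \<le> 16 * exp (2 * R - 2 * T - real n * (2 * T))" .
    qed
  qed
qed

lemma cot_pair_suminf_holomorphic:
  assumes "T > 0" "open S"
    and nz: "\<And>u n. u \<in> S \<Longrightarrow> sin (u + \<i> * of_real (real (Suc n) * T)) \<noteq> 0 \<and>
                             sin (u - \<i> * of_real (real (Suc n) * T)) \<noteq> 0"
  shows "(\<lambda>u. \<Sum>n. cot_pair T u n) holomorphic_on S"
    and "\<And>u. u \<in> S \<Longrightarrow> summable (cot_pair T u)"
proof -
  have hol: "(\<lambda>u. cot_pair T u n) holomorphic_on S" for n
    unfolding cot_pair_def cot_def using nz by (auto intro!: holomorphic_intros)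
  have deriv: "((\<lambda>u. cot_pair T u n) has_field_derivative deriv (\<lambda>u. cot_pair T u n) u) (at u)"
    if "u \<in> S" for n u
    using holomorphic_on_imp_differentiable_at[OF hol assms(2) that]
    by (rule DERIV_deriv_iff_field_differentiable[THEN iffD2])
  have dominated: "\<exists>d h. 0 < d \<and> summable h \<and>
      (\<forall>\<^sub>F n in sequentially. \<forall>y\<in>ball u d \<inter> S. norm (cot_pair T y n) \<le> h n)" for u
  proof (intro exI conjI)
    show "summable (\<lambda>n. 16 * exp (2 * (norm u + 1) - 2 * T - real n * (2 * T)))"
      unfolding exp_linear_geometric using assms(1)
      by (intro summable_mult summable_geometric) auto
    show "\<forall>\<^sub>F n in sequentially. \<forall>y\<in>ball u 1 \<inter> S.
        norm (cot_pair T y n) \<le> 16 * exp (2 * (norm u + 1) - 2 * T - real n * (2 * T))"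
      using cot_pair_eventually_le[OF assms(1), of "norm u + 1"]
    proof eventually_elim
      case (elim n)
      show ?case
      proof
        fix y assume "y \<in> ball u 1 \<inter> S"
        then have "norm y \<le> norm u + 1"
          using norm_triangle_ineq2[of y u] by (auto simp: dist_norm norm_minus_commute)
        then show "norm (cot_pair T y n) \<le> 16 * exp (2 * (norm u + 1) - 2 * T - real n * (2 * T))"
          using elim by blast
      qed
    qed
  qed simp
  obtain g g' where g: "\<And>u. u \<in> S \<Longrightarrow> cot_pair T u sums g u \<and> (g has_field_derivative g' u) (at u)"
    using series_and_derivative_comparison_local[OF assms(2) deriv dominated] by metis
  show "\<And>u. u \<in> S \<Longrightarrow> summable (cot_pair T u)"
    using g sums_summable by blast
  have "g holomorphic_on S"
    using g assms(2) by (auto simp: holomorphic_on_open)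
  then show "(\<lambda>u. \<Sum>n. cot_pair T u n) holomorphic_on S"
    by (rule holomorphic_transform) (use g sums_unique in metis)
qed

lemma sin_add_imaginary_multiple_nonzero:
  assumes "u \<notin> rect_lattice pi T"
  shows "sin (u + \<i> * of_real (real n * T)) \<noteq> 0" "sin (u - \<i> * of_real (real n * T)) \<noteq> 0"
  using sin_add_imaginary_nonzero[OF assms, of "int n"] sin_add_imaginary_nonzero[OF assms, of "- int n"]
  by simp_all

lemma
  assumes "T > 0"
  shows cot_sum_holomorphic: "cot_sum T holomorphic_on - rect_lattice pi T"
    and summable_cot_pair: "u \<notin> rect_lattice pi T \<Longrightarrow> summable (cot_pair T u)"
proof -
  have off_lattice: "sin (u + \<i> * of_real (real (Suc n) * T)) \<noteq> 0 \<and> sin (u - \<i> * of_real (real (Suc n) * T)) \<noteq> 0"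
    if "u \<in> - rect_lattice pi T" for u n
    using that by (intro conjI sin_add_imaginary_multiple_nonzero) simp_all
  note tail = cot_pair_suminf_holomorphic[OF assms open_compl_rect_lattice[OF pi_gt_zero assms] off_lattice]
  show "u \<notin> rect_lattice pi T \<Longrightarrow> summable (cot_pair T u)"
    using tail(2) by simp
  have "cot holomorphic_on - rect_lattice pi T"
    unfolding cot_def using sin_add_imaginary_multiple_nonzero(1)[of _ T 0]
    by (auto intro!: holomorphic_intros)
  then show "cot_sum T holomorphic_on - rect_lattice pi T"
    unfolding cot_sum_def[abs_def] by (intro holomorphic_intros tail(1))
qed

lemma cot_add_pi: "cot (z + of_real pi) = cot (z :: complex)"
  by (simp add: cot_def sin_add cos_add)

lemma cot_sum_add_pi: "cot_sum T (u + of_real pi) = cot_sum T u"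
proof -
  have "cot_pair T (u + of_real pi) = cot_pair T u"
  proof
    fix n
    show "cot_pair T (u + of_real pi) n = cot_pair T u n"
      using cot_add_pi[of "u + \<i> * of_real (real (Suc n) * T)"] cot_add_pi[of "u - \<i> * of_real (real (Suc n) * T)"]
      unfolding cot_pair_def by (simp add: algebra_simps)
  qed
  then show ?thesis
    unfolding cot_sum_def cot_add_pi by simp
qed

lemma cot_neg_add: "cot (- a + b) = - cot (a - b :: complex)"
proof -
  have "- a + b = - (a - b)"
    by simp
  then show ?thesis
    by (simp only: cot_minus)
qed

lemma cot_neg_diff: "cot (- a - b) = - cot (a + b :: complex)"
proof -
  have "- a - b = - (a + b)"
    by simp
  then show ?thesis
    by (simp only: cot_minus)
qed

lemma cot_sum_minus:
  assumes "T > 0" "u \<notin> rect_lattice pi T"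
  shows "cot_sum T (- u) = - cot_sum T u"
proof -
  have "cot_pair T (- u) n = - cot_pair T u n" for n
    unfolding cot_pair_def cot_neg_add cot_neg_diff by simp
  then have "(\<Sum>n. cot_pair T (- u) n) = - (\<Sum>n. cot_pair T u n)"
    using suminf_minus[OF summable_cot_pair[OF assms]] by simp
  then show ?thesis
    unfolding cot_sum_def by simp
qed

lemma cot_add_imaginary_tendsto: "((\<lambda>y. cot (u + \<i> * of_real y)) \<longlongrightarrow> - \<i>) at_top"
proof -
  have norm_exp: "norm (exp (2 * \<i> * (u + \<i> * of_real y))) = exp (- 2 * Im u - 2 * y)" for y
    by simp
  have "((\<lambda>y. exp (- 2 * Im u - 2 * y)) \<longlongrightarrow> 0) at_top"
    by real_asymp
  then have "((\<lambda>y. norm (exp (2 * \<i> * (u + \<i> * of_real y)))) \<longlongrightarrow> 0) at_top"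
    unfolding norm_exp .
  then have "((\<lambda>y. exp (2 * \<i> * (u + \<i> * of_real y))) \<longlongrightarrow> 0) at_top"
    by (rule tendsto_norm_zero_cancel)
  then have "((\<lambda>y. \<i> - 2 * \<i> / (1 - exp (2 * \<i> * (u + \<i> * of_real y)))) \<longlongrightarrow> \<i> - 2 * \<i> / (1 - 0)) at_top"
    by (intro tendsto_intros) auto
  moreover have "eventually (\<lambda>y. \<i> - 2 * \<i> / (1 - exp (2 * \<i> * (u + \<i> * of_real y))) = cot (u + \<i> * of_real y)) at_top"
    using eventually_gt_at_top[of "- Im u"]
  proof eventually_elim
    case (elim y)
    then have "sin (u + \<i> * of_real y) \<noteq> 0"
      by (intro sin_nonzero_if_Im_nonzero) simp
    then show ?case
      by (simp add: cot_conv_exp)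
  qed
  ultimately have "((\<lambda>y. cot (u + \<i> * of_real y)) \<longlongrightarrow> \<i> - 2 * \<i> / (1 - 0)) at_top"
    by (rule Lim_transform_eventually)
  then show ?thesis
    by simp
qed

lemma cot_diff_imaginary_tendsto: "((\<lambda>y. cot (u - \<i> * of_real y)) \<longlongrightarrow> \<i>) at_top"
  using tendsto_minus[OF cot_add_imaginary_tendsto[of "- u"]] by (simp only: cot_neg_add minus_minus)

lemma cot_pair_partial_sum_shift:
  "cot (u + \<i> * of_real T) + (\<Sum>n<N. cot_pair T (u + \<i> * of_real T) n)
     = cot u + (\<Sum>n<N. cot_pair T u n)
       + cot (u + \<i> * of_real (real (Suc N) * T)) - cot (u - \<i> * of_real (real N * T))"
proof -
  define c where "c y = cot (u + \<i> * of_real y)" for y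
  have pair_u: "cot_pair T u n = c (real (Suc n) * T) + c (- (real (Suc n) * T))" for n
    unfolding cot_pair_def c_def by simp
  have pair_u': "cot_pair T (u + \<i> * of_real T) n = c (real (Suc (Suc n)) * T) + c (- (real n * T))" for n
    unfolding cot_pair_def c_def by (simp add: algebra_simps)
  have "cot (u + \<i> * of_real T) + (\<Sum>n<N. cot_pair T (u + \<i> * of_real T) n)
      = cot u + (\<Sum>n<N. cot_pair T u n) + c (real (Suc N) * T) - c (- (real N * T))"
  proof (induction N)
    case 0
    show ?case
      by (simp add: c_def)
  next
    case (Suc N)
    then show ?case
      by (simp add: pair_u pair_u' algebra_simps)
  qed
  then show ?thesis
    by (simp add: c_def)
qed

lemma cot_sum_add_imaginary_period:
  assumes T: "T > 0" and u: "u \<notin> rect_lattice pi T"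
  shows "cot_sum T (u + \<i> * of_real T) = cot_sum T u - 2 * \<i>"
proof -
  have u': "u + \<i> * of_real T \<notin> rect_lattice pi T"
    using u rect_lattice_add_iff[OF _ _ rect_lattice_generators(2)] T by simp
  have "(\<lambda>N. cot u + (\<Sum>n<N. cot_pair T u n)
        + cot (u + \<i> * of_real (real (Suc N) * T)) - cot (u - \<i> * of_real (real N * T)))
      \<longlonglongrightarrow> cot u + (\<Sum>n. cot_pair T u n) + (- \<i>) - \<i>"
  proof (intro tendsto_diff tendsto_add tendsto_const)
    show "(\<lambda>N. \<Sum>n<N. cot_pair T u n) \<longlonglongrightarrow> (\<Sum>n. cot_pair T u n)"
      using summable_cot_pair[OF T u] by (rule summable_LIMSEQ)
    have "filterlim (\<lambda>N. real (Suc N) * T) at_top sequentially"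
      using T by real_asymp
    then show "(\<lambda>N. cot (u + \<i> * of_real (real (Suc N) * T))) \<longlonglongrightarrow> - \<i>"
      by (rule filterlim_compose[OF cot_add_imaginary_tendsto])
    have "filterlim (\<lambda>N. real N * T) at_top sequentially"
      using T by real_asymp
    then show "(\<lambda>N. cot (u - \<i> * of_real (real N * T))) \<longlonglongrightarrow> \<i>"
      by (rule filterlim_compose[OF cot_diff_imaginary_tendsto])
  qed
  moreover have "(\<lambda>N. cot (u + \<i> * of_real T) + (\<Sum>n<N. cot_pair T (u + \<i> * of_real T) n))
      \<longlonglongrightarrow> cot_sum T (u + \<i> * of_real T)"
    unfolding cot_sum_def using summable_cot_pair[OF T u'] by (intro tendsto_add tendsto_const summable_LIMSEQ)
  ultimately show ?thesis
    unfolding cot_pair_partial_sum_shift cot_sum_def using LIMSEQ_unique by fastforce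
qed

lemma tendsto_mult_cot_at_0: "((\<lambda>z::complex. z * cot z) \<longlongrightarrow> 1) (at 0)"
proof -
  have "((\<lambda>z. (sin z - sin 0) / (z - 0)) \<longlongrightarrow> cos 0) (at (0::complex))"
    using DERIV_sin[of "0::complex"] unfolding has_field_derivative_iff .
  then have "((\<lambda>z::complex. sin z / z) \<longlongrightarrow> 1) (at 0)"
    by simp
  then have "((\<lambda>z::complex. cos z / (sin z / z)) \<longlongrightarrow> cos 0 / 1) (at 0)"
    by (intro tendsto_intros) auto
  then show ?thesis
    by (simp add: cot_def field_simps)
qed

lemma cot_sum_mult_tendsto:
  assumes "T > 0"
  shows "((\<lambda>u. u * cot_sum T u) \<longlongrightarrow> 1) (at 0)"
proof -
  have "sin (u + \<i> * of_real (real (Suc n) * T)) \<noteq> 0 \<and> sin (u - \<i> * of_real (real (Suc n) * T)) \<noteq> 0"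
    if "u \<in> ball 0 T" for u n
  proof -
    have "\<bar>Im u\<bar> < T" "T \<le> real (Suc n) * T"
      using that abs_Im_le_cmod[of u] assms by auto
    then show ?thesis
      by (intro conjI sin_nonzero_if_Im_nonzero) auto
  qed
  then have "(\<lambda>u. \<Sum>n. cot_pair T u n) holomorphic_on ball 0 T"
    using assms by (intro cot_pair_suminf_holomorphic) auto
  then have "continuous_on (ball 0 T) (\<lambda>u. \<Sum>n. cot_pair T u n)"
    by (rule holomorphic_on_imp_continuous_on)
  then have "isCont (\<lambda>u. \<Sum>n. cot_pair T u n) 0"
    using assms by (simp add: continuous_on_eq_continuous_at)
  then have "((\<lambda>u. u * cot u + u * (\<Sum>n. cot_pair T u n)) \<longlongrightarrow> 1 + 0 * (\<Sum>n. cot_pair T 0 n)) (at 0)"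
    by (intro tendsto_intros tendsto_mult_cot_at_0) (auto simp: isCont_def)
  then show ?thesis
    by (simp add: cot_sum_def distrib_left)
qed

section \<open>The imaginary transformation\<close>

text \<open>
  The rotation \<open>u \<mapsto> \<i> \<pi> u / T\<close> maps the lattice \<open>\<pi>\<int> + \<i> T \<int>\<close> onto
  \<open>\<pi>\<int> + \<i> (\<pi>\<^sup>2/T) \<int>\<close>; the linear term turns the quasi-period of \<open>cot_sum (\<pi>\<^sup>2/T)\<close>
  along \<open>\<i> \<pi>\<^sup>2/T\<close> into periodicity in \<open>\<pi>\<close> and produces the jump \<open>-2\<i>\<close> along \<open>\<i> T\<close>,
  exactly as for \<open>cot_sum T\<close>.
\<close>

definition cot_sum_dual :: "real \<Rightarrow> complex \<Rightarrow> complex" where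
  "cot_sum_dual T u =
     \<i> * of_real (pi / T) * cot_sum (pi\<^sup>2 / T) (\<i> * of_real (pi / T) * u) - 2 * u / of_real T"

lemma rotate_mem_rect_lattice_iff:
  assumes "T > 0"
  shows "\<i> * of_real (pi / T) * u \<in> rect_lattice pi (pi\<^sup>2 / T) \<longleftrightarrow> u \<in> rect_lattice pi T"
proof -
  have "Re (\<i> * of_real (pi / T) * u) / pi = - (Im u / T)"
    "Im (\<i> * of_real (pi / T) * u) / (pi\<^sup>2 / T) = Re u / pi"
    using assms by (simp_all add: field_simps power2_eq_square)
  then show ?thesis
    using assms by (auto simp: mem_rect_lattice_iff)
qed

lemma cot_sum_dual_holomorphic:
  assumes "T > 0"
  shows "cot_sum_dual T holomorphic_on - rect_lattice pi T"
proof -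
  have "(\<lambda>u. \<i> * of_real (pi / T) * u) ` (- rect_lattice pi T) \<subseteq> - rect_lattice pi (pi\<^sup>2 / T)"
    using rotate_mem_rect_lattice_iff[OF assms] by blast
  then have "cot_sum (pi\<^sup>2 / T) \<circ> (\<lambda>u. \<i> * of_real (pi / T) * u) holomorphic_on - rect_lattice pi T"
    using assms by (intro holomorphic_on_compose_gen[OF _ cot_sum_holomorphic]) (auto intro!: holomorphic_intros)
  then show ?thesis
    unfolding cot_sum_dual_def[abs_def] using assms
    by (intro holomorphic_intros) (auto simp: o_def)
qed

lemma cot_sum_dual_add_pi:
  assumes "T > 0" "u \<notin> rect_lattice pi T"
  shows "cot_sum_dual T (u + of_real pi) = cot_sum_dual T u"
proof -
  have "\<i> * of_real (pi / T) * u \<notin> rect_lattice pi (pi\<^sup>2 / T)"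
    using rotate_mem_rect_lattice_iff[OF assms(1)] assms(2) by blast
  then have "cot_sum (pi\<^sup>2 / T) (\<i> * of_real (pi / T) * u + \<i> * of_real (pi\<^sup>2 / T))
      = cot_sum (pi\<^sup>2 / T) (\<i> * of_real (pi / T) * u) - 2 * \<i>"
    using assms(1) by (intro cot_sum_add_imaginary_period) auto
  moreover have "\<i> * of_real (pi / T) * (u + of_real pi) = \<i> * of_real (pi / T) * u + \<i> * of_real (pi\<^sup>2 / T)"
    using assms(1) by (simp add: field_simps power2_eq_square)
  ultimately have "cot_sum_dual T (u + of_real pi) =
      \<i> * of_real (pi / T) * (cot_sum (pi\<^sup>2 / T) (\<i> * of_real (pi / T) * u) - 2 * \<i>) - 2 * (u + of_real pi) / of_real T"
    unfolding cot_sum_dual_def by simp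
  also have "\<dots> = cot_sum_dual T u"
    using assms(1) unfolding cot_sum_dual_def by (simp add: field_simps)
  finally show ?thesis .
qed

lemma cot_sum_dual_add_imaginary_period:
  assumes "T > 0"
  shows "cot_sum_dual T (u + \<i> * of_real T) = cot_sum_dual T u - 2 * \<i>"
proof -
  have "\<i> * of_real (pi / T) * (u + \<i> * of_real T) + of_real pi = \<i> * of_real (pi / T) * u"
    using assms by (simp add: field_simps)
  then have "cot_sum (pi\<^sup>2 / T) (\<i> * of_real (pi / T) * (u + \<i> * of_real T))
      = cot_sum (pi\<^sup>2 / T) (\<i> * of_real (pi / T) * u)"
    by (metis cot_sum_add_pi)
  then show ?thesis
    using assms unfolding cot_sum_dual_def by (simp add: field_simps)
qed

lemma cot_sum_dual_minus:
  assumes "T > 0" "u \<notin> rect_lattice pi T"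
  shows "cot_sum_dual T (- u) = - cot_sum_dual T u"
proof -
  have "\<i> * of_real (pi / T) * u \<notin> rect_lattice pi (pi\<^sup>2 / T)"
    using rotate_mem_rect_lattice_iff[OF assms(1)] assms(2) by blast
  then have "cot_sum (pi\<^sup>2 / T) (- (\<i> * of_real (pi / T) * u)) = - cot_sum (pi\<^sup>2 / T) (\<i> * of_real (pi / T) * u)"
    using assms(1) by (intro cot_sum_minus) auto
  then show ?thesis
    unfolding cot_sum_dual_def by simp
qed

lemma filterlim_mult_left_at_0:
  fixes c :: "'a :: real_normed_field"
  assumes "c \<noteq> 0"
  shows "filterlim (\<lambda>z. c * z) (at 0) (at 0)"
  unfolding filterlim_at
  by (auto simp: eventually_at_filter assms intro!: always_eventually tendsto_eq_intros)

lemma cot_sum_dual_mult_tendsto: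
  assumes "T > 0"
  shows "((\<lambda>u. u * cot_sum_dual T u) \<longlongrightarrow> 1) (at 0)"
proof -
  define c where "c = \<i> * complex_of_real (pi / T)"
  have "c \<noteq> 0" "pi\<^sup>2 / T > 0"
    using assms by (simp_all add: c_def)
  have "((\<lambda>u. c * u * cot_sum (pi\<^sup>2 / T) (c * u)) \<longlongrightarrow> 1) (at 0)"
    by (rule filterlim_compose[OF cot_sum_mult_tendsto[OF \<open>pi\<^sup>2 / T > 0\<close>] filterlim_mult_left_at_0[OF \<open>c \<noteq> 0\<close>]])
  moreover have "((\<lambda>u. 2 * u * u / of_real T) \<longlongrightarrow> 2 * 0 * 0 / of_real T) (at (0 :: complex))"
    by (intro tendsto_intros) (use assms in auto)
  ultimately have "((\<lambda>u. c * u * cot_sum (pi\<^sup>2 / T) (c * u) - 2 * u * u / of_real T) \<longlongrightarrow> 1 - 2 * 0 * 0 / of_real T) (at 0)"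
    by (rule tendsto_diff)
  moreover have "u * cot_sum_dual T u = c * u * cot_sum (pi\<^sup>2 / T) (c * u) - 2 * u * u / of_real T" for u
    unfolding cot_sum_dual_def c_def by (simp add: algebra_simps)
  ultimately show ?thesis
    by simp
qed

lemma of_real_notin_rect_lattice:
  assumes "a > 0" "b \<noteq> 0" "0 < x" "x < a"
  shows "complex_of_real x \<notin> rect_lattice a b"
proof
  assume "complex_of_real x \<in> rect_lattice a b"
  then have "x / a \<in> \<int>"
    using assms(1,2) by (simp add: mem_rect_lattice_iff)
  moreover have "\<bar>x / a\<bar> < 1" "x / a \<noteq> 0"
    using assms by simp_all
  ultimately show False
    using Ints_nonzero_abs_less1 by blast
qed

theorem cot_sum_eq_cot_sum_dual:
  assumes T: "T > 0" and u: "u \<notin> rect_lattice pi T"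
  shows "cot_sum T u = cot_sum_dual T u"
proof -
  define D where "D z = cot_sum_dual T z - cot_sum T z" for z
  have hol: "D holomorphic_on - rect_lattice pi T"
    unfolding D_def[abs_def] using cot_sum_dual_holomorphic[OF T] cot_sum_holomorphic[OF T]
    by (intro holomorphic_intros)
  have periodic: "D (z + w) = D z" if "z \<notin> rect_lattice pi T" "w \<in> rect_lattice pi T" for z w
  proof -
    have per_pi: "D (y + complex_of_real pi) = D y" if "y \<notin> rect_lattice pi T" for y
      unfolding D_def using that T by (simp add: cot_sum_dual_add_pi cot_sum_add_pi)
    have per_iT: "D (y + \<i> * complex_of_real T) = D y" if "y \<notin> rect_lattice pi T" for y
      unfolding D_def using that T by (simp add: cot_sum_dual_add_imaginary_period cot_sum_add_imaginary_period)
    show ?thesis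
      using T by (intro rect_lattice_periodicI[of pi T D, OF _ _ per_pi per_iT that]) auto
  qed
  have "((\<lambda>z. z * D z) \<longlongrightarrow> 1 - 1) (at 0)"
    unfolding D_def right_diff_distrib
    by (intro tendsto_diff cot_sum_dual_mult_tendsto cot_sum_mult_tendsto T)
  then have lim: "((\<lambda>z. z * D z) \<longlongrightarrow> 0) (at 0)"
    by simp
  obtain c where c: "\<And>z. z \<notin> rect_lattice pi T \<Longrightarrow> D z = c"
    using rect_lattice_periodic_imp_constant[OF pi_gt_zero T hol periodic lim] by blast
  define z0 where "z0 = complex_of_real (pi / 2)"
  have z0: "z0 \<notin> rect_lattice pi T" "- z0 \<notin> rect_lattice pi T"
    unfolding z0_def using of_real_notin_rect_lattice[of pi T "pi / 2"] T
    by (simp_all add: rect_lattice_uminus_iff)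
  have "D (- z0) = - D z0"
    unfolding D_def using T z0(1) by (simp add: cot_sum_dual_minus cot_sum_minus)
  then have "c = 0"
    using c z0 by simp
  then show ?thesis
    using c[OF u] by (simp add: D_def)
qed

section \<open>Evaluation at \<open>\<pi>/4\<close>\<close>

lemma cot_add_cot:
  fixes a b :: "'a :: {real_normed_field, banach}"
  assumes "sin a \<noteq> 0" "sin b \<noteq> 0"
  shows "cot a + cot b = sin (a + b) / (sin a * sin b)"
  using assms by (simp add: cot_def sin_add field_simps)

lemma cot_add_cot_cnj:
  fixes a :: complex
  assumes "sin a \<noteq> 0"
  shows "cot a + cot (cnj a) = of_real (sin (2 * Re a) / (norm (sin a))\<^sup>2)"
proof -
  have "a + cnj a = of_real (2 * Re a)"
    by (simp add: complex_eq_iff)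
  then have "sin (a + cnj a) = of_real (sin (2 * Re a))"
    by (simp only: sin_of_real)
  have "sin (cnj a) \<noteq> 0"
    using assms by (simp flip: cnj_sin)
  with assms have "cot a + cot (cnj a) = sin (a + cnj a) / (sin a * sin (cnj a))"
    by (rule cot_add_cot)
  also have "\<dots> = of_real (sin (2 * Re a)) / of_real ((norm (sin a))\<^sup>2)"
    unfolding \<open>sin (a + cnj a) = _\<close> complex_norm_square by (simp add: cnj_sin)
  finally show ?thesis
    by simp
qed

lemma Re_cot_sum_quarter_pi_ge_1:
  assumes "T > 0"
  shows "1 \<le> Re (cot_sum T (of_real (pi / 4)))"
proof -
  have u: "complex_of_real (pi / 4) \<notin> rect_lattice pi T"
    using assms by (intro of_real_notin_rect_lattice) auto
  have pair: "0 \<le> Re (cot_pair T (of_real (pi / 4)) n)" for n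
  proof -
    define a where "a = complex_of_real (pi / 4) + \<i> * of_real (real (Suc n) * T)"
    have "sin a \<noteq> 0"
      unfolding a_def using sin_add_imaginary_multiple_nonzero(1)[OF u] .
    moreover have "cot_pair T (of_real (pi / 4)) n = cot a + cot (cnj a)"
      unfolding cot_pair_def a_def by simp
    ultimately show ?thesis
      using cot_add_cot_cnj[of a] by (simp add: a_def)
  qed
  have "cot (pi / 4 :: real) = 1"
    by (simp add: cot_def sin_45 cos_45)
  then have "cot (complex_of_real (pi / 4)) = 1"
    using cot_of_real[of "pi / 4"] by simp
  moreover have "0 \<le> (\<Sum>n. Re (cot_pair T (of_real (pi / 4)) n))"
    using summable_Re[OF summable_cot_pair[OF assms u]] pair by (rule suminf_nonneg)
  ultimately show ?thesis
    unfolding cot_sum_def using Re_suminf[OF summable_cot_pair[OF assms u]] by simp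
qed

lemma sinh_complex_of_real: "sinh (complex_of_real x) = of_real (sinh x)"
  by (simp add: sinh_field_def exp_of_real flip: of_real_minus)

lemma cosh_complex_of_real: "cosh (complex_of_real x) = of_real (cosh x)"
  by (simp add: cosh_field_def exp_of_real flip: of_real_minus)

lemma cot_imaginary: "cot (\<i> * complex_of_real x) = - \<i> * of_real (coth x)"
proof -
  have "sin (\<i> * complex_of_real x) = \<i> * of_real (sinh x)"
    using sinh_conv_sin[of "complex_of_real x"] by (simp add: sinh_complex_of_real)
  moreover have "cos (\<i> * complex_of_real x) = of_real (cosh x)"
    using cosh_conv_cos[of "complex_of_real x"] by (simp add: cosh_complex_of_real)
  ultimately show ?thesis
    by (cases "sinh x = 0") (simp_all add: cot_def coth_def field_simps)
qed

lemma cot_pair_imaginary: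
  "cot_pair T (\<i> * of_real x) n = - \<i> * of_real (coth (x + real (Suc n) * T) + coth (x - real (Suc n) * T))"
proof -
  have shifts: "\<i> * of_real x + \<i> * of_real (real (Suc n) * T) = \<i> * of_real (x + real (Suc n) * T)"
    "\<i> * of_real x - \<i> * of_real (real (Suc n) * T) = \<i> * of_real (x - real (Suc n) * T)"
    by (simp_all add: algebra_simps)
  show ?thesis
    unfolding cot_pair_def shifts cot_imaginary by (simp add: algebra_simps)
qed

lemma coth_add_coth:
  assumes "sinh x \<noteq> 0" "sinh y \<noteq> 0"
  shows "coth x + coth y = 2 * sinh (x + y) / (cosh (x + y) - cosh (x - y))"
proof -
  have "cosh (x + y) - cosh (x - y) = 2 * sinh x * sinh y"
    by (simp add: cosh_add cosh_diff)
  then show ?thesis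
    using assms by (simp add: coth_def sinh_add field_simps)
qed

lemma coth_add_coth_diff:
  assumes "0 < x" "x < y"
  shows "coth (x + y) + coth (x - y) = 2 * sinh (2 * x) / (cosh (2 * x) - cosh (2 * y))"
proof -
  have "sinh (x + y) \<noteq> 0" "sinh (x - y) \<noteq> 0"
    using assms by simp_all
  then show ?thesis
    by (simp add: coth_add_coth)
qed

lemma cot_pair_dual_quarter_pi:
  assumes T: "T > 0"
  shows "\<i> * of_real (pi / T) * cot_pair (pi\<^sup>2 / T) (\<i> * of_real (pi * (pi / 2) / (2 * T))) n
    = of_real (pi / T * (2 * sinh (pi * (pi / 2) / T)
        / (cosh (pi * (pi / 2) / T) - cosh (2 * pi\<^sup>2 * real (Suc n) / T))))"
proof -
  define A where "A = pi * (pi / 2) / (2 * T)"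
  have "A = pi\<^sup>2 / T / 4" "0 < pi\<^sup>2 / T"
    using T by (simp_all add: A_def power2_eq_square)
  moreover have "1 * (pi\<^sup>2 / T) \<le> real (Suc n) * (pi\<^sup>2 / T)"
    using T by (intro mult_right_mono) auto
  ultimately have A_bounds: "0 < A" "A < real (Suc n) * (pi\<^sup>2 / T)"
    by simp_all
  have args: "2 * A = pi * (pi / 2) / T" "2 * (real (Suc n) * (pi\<^sup>2 / T)) = 2 * pi\<^sup>2 * real (Suc n) / T"
    using T by (simp_all add: A_def)
  show ?thesis
    using coth_add_coth_diff[OF A_bounds]
    unfolding A_def[symmetric] cot_pair_imaginary args by (simp add: algebra_simps)
qed

lemma cot_sum_dual_quarter_pi:
  assumes T: "T > 0"
  shows "cot_sum_dual T (of_real (pi / 4)) = of_real (beta T (pi / 2))"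
proof -
  define A where "A = pi * (pi / 2) / (2 * T)"
  define t where "t n = 2 * sinh (pi * (pi / 2) / T) / (cosh (pi * (pi / 2) / T) - cosh (2 * pi\<^sup>2 * real (Suc n) / T))"
    for n
  have rotate: "\<i> * of_real (pi / T) * of_real (pi / 4) = \<i> * of_real A"
    by (simp add: A_def field_simps)
  have "\<i> * of_real A \<notin> rect_lattice pi (pi\<^sup>2 / T)"
    unfolding rotate[symmetric] rotate_mem_rect_lattice_iff[OF T]
    using T by (intro of_real_notin_rect_lattice) auto
  then have summable: "summable (cot_pair (pi\<^sup>2 / T) (\<i> * of_real A))"
    using T by (intro summable_cot_pair) auto
  have pair: "\<i> * of_real (pi / T) * cot_pair (pi\<^sup>2 / T) (\<i> * of_real A) n = of_real (pi / T * t n)" for n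
    unfolding A_def t_def by (rule cot_pair_dual_quarter_pi[OF T])
  have summable_t: "summable (\<lambda>n. pi / T * t n)"
    using summable_mult[OF summable, of "\<i> * of_real (pi / T)"] unfolding pair summable_of_real_iff .
  then have "summable t"
    using T by (simp add: summable_cmult_iff)
  have "cot_sum_dual T (of_real (pi / 4)) = \<i> * of_real (pi / T) * cot (\<i> * of_real A)
      + (\<Sum>n. \<i> * of_real (pi / T) * cot_pair (pi\<^sup>2 / T) (\<i> * of_real A) n) - of_real (pi / 2 / T)"
    unfolding cot_sum_dual_def cot_sum_def rotate suminf_mult[OF summable] by (simp add: algebra_simps)
  also have "\<dots> = of_real (pi / T * coth A + (\<Sum>n. pi / T * t n) - pi / 2 / T)"
    unfolding pair suminf_of_real[OF summable_t, symmetric] cot_imaginary by (simp add: algebra_simps)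
  also have "\<dots> = of_real (pi / T * coth A + pi / T * suminf t - pi / 2 / T)"
    by (simp only: suminf_mult[OF \<open>summable t\<close>])
  also have "\<dots> = of_real (beta T (pi / 2))"
  proof -
    have "beta T (pi / 2) = - (pi / 2) / T + pi / T * coth A + pi / T * suminf t"
      unfolding beta_def A_def t_def by simp
    then show ?thesis
      by (simp only: of_real_eq_iff)
  qed
  finally show ?thesis .
qed

theorem theorem1:
  fixes d :: real
  assumes "d > 0"
  shows "beta d (pi / 2) \<ge> 1"
proof -
  have "complex_of_real (pi / 4) \<notin> rect_lattice pi d"
    using assms by (intro of_real_notin_rect_lattice) auto
  from cot_sum_eq_cot_sum_dual[OF assms this]
  have "cot_sum d (of_real (pi / 4)) = of_real (beta d (pi / 2))"
    unfolding cot_sum_dual_quarter_pi[OF assms] .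
  then show ?thesis
    using Re_cot_sum_quarter_pi_ge_1[OF assms] by simp
qed

end
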